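(* Let $G$ be a groupoid (a small category in which every morphism is an isomorphism) and let $X$ be a set equipped with a partial function ${\rm mor}(G)\times X\to X$, $(g,x)\mapsto g\cdot x$ where defined. Then this is a partial category action, i.e. satisfies (C1)–(C3) below, if and only if it is a partial groupoid action, i.e. satisfies (GR1)–(GR3) below.
   Context: Conventions: objects are identified with their identity morphisms, so ${\rm ob}(G)\subseteq{\rm mor}(G)$; $d(g), c(g)$ are domain and codomain, $G^2=\{(g,h)\mid d(g)=c(h)\}$, and $g^{-1}$ is the inverse of $g$. Axioms: (C1) = (GR1): for every $x\in X$ there is $e\in{\rm ob}(G)$ with $e\cdot x$ defined, and whenever $f\in{\rm ob}(G)$ and $f\cdot x$ is defined, $f\cdot x = x$. (C2): if $g\cdot x$ is defined then $d(g)\cdot x$ is defined. (C3): if $(g,h)\in G^2$ and $h\cdot x$ is defined, then $(gh)\cdot x$ is defined iff $g\cdot(h\cdot x)$ is defined, and then they are equal. (GR2): if $g\cdot x$ is defined then $g^{-1}\cdot(g\cdot x)$ is defined and equals $x$. (GR3): if $(g,h)\in G^2$ and $g\cdot(h\cdot x)$ is defined, then $(gh)\cdot x$ is defined and equals $g\cdot(h\cdot x)$. *)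

theory Defs
  imports Main
begin

text \<open>A groupoid with morphism set M, object set Ob (objects identified with their
identity morphisms, Ob \<subseteq> M), domain dm, codomain cd, composition cmp g h = g h
(meaningful when dm g = cd h) and inverse iv.\<close>

definition groupoid ::
  "'g set \<Rightarrow> 'g set \<Rightarrow> ('g \<Rightarrow> 'g) \<Rightarrow> ('g \<Rightarrow> 'g) \<Rightarrow> ('g \<Rightarrow> 'g \<Rightarrow> 'g) \<Rightarrow> ('g \<Rightarrow> 'g) \<Rightarrow> bool"
where
  "groupoid M Ob dm cd cmp iv \<longleftrightarrow>
     Ob \<subseteq> M \<and>
     (\<forall>g\<in>M. dm g \<in> Ob \<and> cd g \<in> Ob) \<and>
     (\<forall>e\<in>Ob. dm e = e \<and> cd e = e) \<and>
     (\<forall>g\<in>M. \<forall>h\<in>M. dm g = cd h \<longrightarrow>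
        cmp g h \<in> M \<and> dm (cmp g h) = dm h \<and> cd (cmp g h) = cd g) \<and>
     (\<forall>f\<in>M. \<forall>g\<in>M. \<forall>h\<in>M. dm f = cd g \<longrightarrow> dm g = cd h \<longrightarrow>
        cmp (cmp f g) h = cmp f (cmp g h)) \<and>
     (\<forall>g\<in>M. cmp g (dm g) = g \<and> cmp (cd g) g = g) \<and>
     (\<forall>g\<in>M. iv g \<in> M \<and> dm (iv g) = cd g \<and> cd (iv g) = dm g \<and>
        cmp g (iv g) = cd g \<and> cmp (iv g) g = dm g)"

text \<open>A partial function mor(G) \<times> X \<rightarrow> X, encoded as act g x = Some (g\<cdot>x) when defined.\<close>

definition partial_map_on ::
  "'g set \<Rightarrow> 'x set \<Rightarrow> ('g \<Rightarrow> 'x \<Rightarrow> 'x option) \<Rightarrow> bool" where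
  "partial_map_on M X act \<longleftrightarrow>
     (\<forall>g x y. act g x = Some y \<longrightarrow> g \<in> M \<and> x \<in> X \<and> y \<in> X)"

abbreviation defd :: "('g \<Rightarrow> 'x \<Rightarrow> 'x option) \<Rightarrow> 'g \<Rightarrow> 'x \<Rightarrow> bool" where
  "defd act g x \<equiv> act g x \<noteq> None"

definition defd2 :: "('g \<Rightarrow> 'x \<Rightarrow> 'x option) \<Rightarrow> 'g \<Rightarrow> 'g \<Rightarrow> 'x \<Rightarrow> bool" where
  "defd2 act g h x \<longleftrightarrow> (\<exists>y. act h x = Some y \<and> act g y \<noteq> None)"

text \<open>(C1) = (GR1)\<close>
definition ax_C1 where
  "ax_C1 Ob X act \<longleftrightarrow>
     (\<forall>x\<in>X. (\<exists>e\<in>Ob. defd act e x) \<and> (\<forall>f\<in>Ob. defd act f x \<longrightarrow> act f x = Some x))"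

definition ax_C2 where
  "ax_C2 M dm X act \<longleftrightarrow>
     (\<forall>g\<in>M. \<forall>x\<in>X. defd act g x \<longrightarrow> defd act (dm g) x)"

definition ax_C3 where
  "ax_C3 M dm cd cmp X act \<longleftrightarrow>
     (\<forall>g\<in>M. \<forall>h\<in>M. \<forall>x\<in>X. dm g = cd h \<longrightarrow> defd act h x \<longrightarrow>
        ((defd act (cmp g h) x \<longleftrightarrow> defd2 act g h x) \<and>
         (defd act (cmp g h) x \<longrightarrow> act (cmp g h) x = act g (the (act h x)))))"

definition ax_GR2 where
  "ax_GR2 M iv X act \<longleftrightarrow>
     (\<forall>g\<in>M. \<forall>x\<in>X. defd act g x \<longrightarrow> act (iv g) (the (act g x)) = Some x)"

definition ax_GR3 where
  "ax_GR3 M dm cd cmp X act \<longleftrightarrow>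
     (\<forall>g\<in>M. \<forall>h\<in>M. \<forall>x\<in>X. dm g = cd h \<longrightarrow> defd2 act g h x \<longrightarrow>
        act (cmp g h) x = act g (the (act h x)))"

definition partial_category_action where
  "partial_category_action M Ob dm cd cmp X act \<longleftrightarrow>
     ax_C1 Ob X act \<and> ax_C2 M dm X act \<and> ax_C3 M dm cd cmp X act"

definition partial_groupoid_action where
  "partial_groupoid_action M Ob dm cd cmp iv X act \<longleftrightarrow>
     ax_C1 Ob X act \<and> ax_GR2 M iv X act \<and> ax_GR3 M dm cd cmp X act"

end

theory Submission
  imports Defs
begin

text \<open>In a groupoid the action of the unit dm g on x is reached as the composite
  g\<inverse> g, so (C2) and (GR2) are interchangeable given the composition axiom;
  and the missing half of (C3), that (g h)\<cdot>x defined forces g\<cdot>(h\<cdot>x) defined,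
  follows by applying (GR3) to (g h) h\<inverse> at the point h\<cdot>x, whose
  inverse image under h\<inverse> is x by (GR2).\<close>

lemma groupoid_inverse:
  assumes "groupoid M Ob dm cd cmp iv" and "g \<in> M"
  shows "iv g \<in> M" "dm (iv g) = cd g" "cd (iv g) = dm g"
    and "cmp (iv g) g = dm g" "cmp g (iv g) = cd g"
  using assms unfolding groupoid_def by auto

lemma groupoid_comp_inverse_cancel:
  assumes G: "groupoid M Ob dm cd cmp iv"
    and "g \<in> M" "h \<in> M" "dm g = cd h"
  shows "cmp (cmp g h) (iv h) = g"
proof -
  have "cmp (cmp g h) (iv h) = cmp g (cmp h (iv h))"
    using assms groupoid_inverse[OF G \<open>h \<in> M\<close>] unfolding groupoid_def by metis
  also have "\<dots> = cmp g (dm g)"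
    using groupoid_inverse[OF G \<open>h \<in> M\<close>] \<open>dm g = cd h\<close> by simp
  also have "\<dots> = g"
    using G \<open>g \<in> M\<close> unfolding groupoid_def by blast
  finally show ?thesis .
qed

lemma ax_C3_imp_ax_GR3:
  "ax_C3 M dm cd cmp X act \<Longrightarrow> ax_GR3 M dm cd cmp X act"
  unfolding ax_C3_def ax_GR3_def defd2_def by (metis option.distinct(1))

lemma partial_category_action_imp_ax_GR2:
  assumes G: "groupoid M Ob dm cd cmp iv"
    and A: "partial_category_action M Ob dm cd cmp X act"
  shows "ax_GR2 M iv X act"
  unfolding ax_GR2_def
proof (intro ballI impI)
  fix g x assume g: "g \<in> M" and x: "x \<in> X" and d: "defd act g x"
  have "dm g \<in> Ob" using G g unfolding groupoid_def by blast
  moreover have "defd act (dm g) x"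
    using A g x d unfolding partial_category_action_def ax_C2_def by blast
  ultimately have unit: "act (dm g) x = Some x"
    using A x unfolding partial_category_action_def ax_C1_def by blast
  note i = groupoid_inverse[OF G g]
  have "act (cmp (iv g) g) x = act (iv g) (the (act g x))"
    using A i g x d unit unfolding partial_category_action_def ax_C3_def
    by (metis option.distinct(1))
  then show "act (iv g) (the (act g x)) = Some x"
    using unit i by simp
qed

lemma partial_groupoid_action_imp_ax_C2:
  assumes G: "groupoid M Ob dm cd cmp iv"
    and A: "partial_groupoid_action M Ob dm cd cmp iv X act"
  shows "ax_C2 M dm X act"
  unfolding ax_C2_def
proof (intro ballI impI)
  fix g x assume g: "g \<in> M" and x: "x \<in> X" and d: "defd act g x"
  then obtain y where y: "act g x = Some y" by auto
  have returns: "act (iv g) y = Some x"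
    using A g x d y unfolding partial_groupoid_action_def ax_GR2_def by force
  note i = groupoid_inverse[OF G g]
  have "act (cmp (iv g) g) x = act (iv g) y"
    using A i g x y returns
    unfolding partial_groupoid_action_def ax_GR3_def defd2_def by force
  then show "defd act (dm g) x"
    using i returns by simp
qed

lemma partial_groupoid_action_imp_ax_C3:
  assumes G: "groupoid M Ob dm cd cmp iv"
    and P: "partial_map_on M X act"
    and A: "partial_groupoid_action M Ob dm cd cmp iv X act"
  shows "ax_C3 M dm cd cmp X act"
  unfolding ax_C3_def
proof (intro ballI impI)
  fix g h x assume g: "g \<in> M" and h: "h \<in> M" and x: "x \<in> X"
    and gh: "dm g = cd h" and d: "defd act h x"
  then obtain y where y: "act h x = Some y" by auto
  have yX: "y \<in> X" using P y unfolding partial_map_on_def by blast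
  have GR2: "ax_GR2 M iv X act" and GR3: "ax_GR3 M dm cd cmp X act"
    using A unfolding partial_groupoid_action_def by auto
  have returns: "act (iv h) y = Some x"
    using GR2 h x y unfolding ax_GR2_def by force
  note ih = groupoid_inverse[OF G h]
  have gh_M: "cmp g h \<in> M" and dm_gh: "dm (cmp g h) = dm h"
    using G g h gh unfolding groupoid_def by auto
  have compose: "act (cmp g h) x = act g y" if "defd2 act g h x"
    using GR3 g h x gh that y unfolding ax_GR3_def by simp
  have decompose: "defd2 act g h x" if "defd act (cmp g h) x"
  proof -
    have "act (cmp (cmp g h) (iv h)) y = act (cmp g h) x"
      using GR3 gh_M dm_gh ih yX returns that
      unfolding ax_GR3_def defd2_def by simp
    then have "act g y = act (cmp g h) x"
      using groupoid_comp_inverse_cancel[OF G g h gh] by simp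
    then show ?thesis
      using y that unfolding defd2_def by simp
  qed
  have "defd act (cmp g h) x" if "defd2 act g h x"
    using compose[OF that] that y unfolding defd2_def by simp
  then show "(defd act (cmp g h) x \<longleftrightarrow> defd2 act g h x) \<and>
      (defd act (cmp g h) x \<longrightarrow> act (cmp g h) x = act g (the (act h x)))"
    using compose decompose y by auto
qed

theorem proposition4p2:
  fixes M Ob :: "'g set" and dm cd iv :: "'g \<Rightarrow> 'g" and cmp :: "'g \<Rightarrow> 'g \<Rightarrow> 'g"
    and X :: "'x set" and act :: "'g \<Rightarrow> 'x \<Rightarrow> 'x option"
  assumes "groupoid M Ob dm cd cmp iv"
    and "partial_map_on M X act"
  shows "partial_category_action M Ob dm cd cmp X act \<longleftrightarrow>
         partial_groupoid_action M Ob dm cd cmp iv X act"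
proof
  assume "partial_category_action M Ob dm cd cmp X act"
  then show "partial_groupoid_action M Ob dm cd cmp iv X act"
    using partial_category_action_imp_ax_GR2[OF assms(1)] ax_C3_imp_ax_GR3
    unfolding partial_category_action_def partial_groupoid_action_def by blast
next
  assume "partial_groupoid_action M Ob dm cd cmp iv X act"
  then show "partial_category_action M Ob dm cd cmp X act"
    using partial_groupoid_action_imp_ax_C2[OF assms(1)]
      partial_groupoid_action_imp_ax_C3[OF assms]
    unfolding partial_category_action_def partial_groupoid_action_def by blast
qed

end
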